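(* Let $\mathcal{H}$ be a Hilbert space, $h\in\mathcal{H}$, $\mathcal{L}$ a nonempty set of closed subspaces of $\mathcal{H}$, and define $\mathcal{C}: 2^{\mathcal{L}}\to 2^{\mathcal{L}}$ by $b\in\mathcal{C}(A)$ iff $A^*_p(h)\in b$. If $A,B\subseteq\mathcal{L}$ and $B\subseteq\mathcal{C}(A)$, then $A^*_p(h)=(A^*\cap B^* )_p(h)$ and $d(h,A^* )\ge d(h,B^* )$.
   Context: For $A\subseteq\mathcal{L}$, $A^*=\bigcap_{a\in A}a$ (with $A^*=\mathcal{H}$ if $A=\emptyset$); for a closed subspace $V$, $V_p$ denotes the orthogonal projection onto $V$ (so $V_p(h)$ is the point of $V$ closest to $h$), and $A^*_p=(A^* )_p$. $d(h,V)$ denotes the distance from $h$ to the closed subspace $V$. *)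

theory Defs
  imports "HOL-Analysis.Analysis"
begin

definition closed_subspace :: "'a::real_inner set \<Rightarrow> bool" where
  "closed_subspace V \<longleftrightarrow> subspace V \<and> closed V"

definition orth_proj :: "'a::real_inner set \<Rightarrow> 'a \<Rightarrow> 'a" where
  "orth_proj V h = (THE x. x \<in> V \<and> (\<forall>y\<in>V. dist h x \<le> dist h y))"

text \<open>A* = intersection of A (UNIV for A empty, as Inter {} = UNIV).\<close>
abbreviation star :: "'a set set \<Rightarrow> 'a set" where
  "star A \<equiv> \<Inter> A"

definition closure_op :: "'a::real_inner set set \<Rightarrow> 'a \<Rightarrow> 'a set set \<Rightarrow> 'a set set" where
  "closure_op L h A = {b \<in> L. orth_proj (\<Inter> A) h \<in> b}"

end

theory Submission
  imports Defs
begin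

text \<open>Every closed convex nonempty set in a Hilbert space has a unique closest point to \<open>h\<close>:
  a minimizing sequence is Cauchy by the parallelogram law, since the midpoint of two of its
  members stays in the set. Hence \<open>A\<^sup>*\<^sub>p(h)\<close> exists, and when it lies in every member of \<open>B\<close> it
  is also the closest point of the smaller set \<open>A\<^sup>* \<inter> B\<^sup>*\<close>; its distance \<open>d(h, A\<^sup>*)\<close> to \<open>h\<close>
  bounds \<open>d(h, B\<^sup>*)\<close> from above.\<close>

lemma midpoint_in_convex:
  assumes "convex S" "x \<in> S" "y \<in> S"
  shows "midpoint x y \<in> S"
  using convexD[OF assms, of "1/2" "1/2"] by (simp add: midpoint_def scaleR_add_right)

lemma parallelogram_law_midpoint:
  fixes h x y :: "'a::real_inner"
  shows "norm (x - y)^2 = 2 * norm (h - x)^2 + 2 * norm (h - y)^2 - 4 * norm (h - midpoint x y)^2"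
  unfolding power2_norm_eq_inner midpoint_def
  by (simp add: inner_diff_left inner_diff_right inner_add_left inner_add_right
      inner_commute algebra_simps)

lemma convex_minimizing_sequence_Cauchy:
  fixes S :: "'a::real_inner set"
  assumes "convex S" and in_S: "\<And>n. x n \<in> S"
    and minimizing: "(\<lambda>n. dist h (x n)) \<longlonglongrightarrow> infdist h S"
  shows "Cauchy x"
proof (rule CauchyI)
  fix e :: real
  assume "0 < e"
  define d where "d = infdist h S"
  have "(\<lambda>n. dist h (x n)^2) \<longlonglongrightarrow> d^2"
    using minimizing unfolding d_def by (intro tendsto_intros)
  then obtain M where M: "\<And>n. n \<ge> M \<Longrightarrow> dist h (x n)^2 < d^2 + e^2 / 4"
    using order_tendstoD(2)[of _ "d^2" sequentially "d^2 + e^2 / 4"] \<open>0 < e\<close>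
    by (auto simp: eventually_sequentially)
  show "\<exists>M. \<forall>m\<ge>M. \<forall>n\<ge>M. norm (x m - x n) < e"
  proof (intro exI allI impI)
    fix m n
    assume "M \<le> m" "M \<le> n"
    have "d \<le> norm (h - midpoint (x m) (x n))"
      unfolding d_def dist_norm[symmetric]
      by (intro infdist_le midpoint_in_convex[OF \<open>convex S\<close> in_S in_S])
    then have "d^2 \<le> norm (h - midpoint (x m) (x n))^2"
      by (intro power_mono) (simp_all add: d_def infdist_nonneg)
    then have "norm (x m - x n)^2 < e^2"
      using parallelogram_law_midpoint[of "x m" "x n" h] M[OF \<open>M \<le> m\<close>] M[OF \<open>M \<le> n\<close>]
      by (simp add: dist_norm)
    then show "norm (x m - x n) < e"
      using \<open>0 < e\<close> by (simp add: power_less_imp_less_base)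
  qed
qed

lemma complete_convex_closest_point_exists:
  fixes S :: "'a::real_inner set"
  assumes "complete S" "convex S" "S \<noteq> {}"
  obtains x where "x \<in> S" "\<forall>y\<in>S. dist h x \<le> dist h y"
proof -
  have "bdd_below (dist h ` S)"
    by (rule bdd_belowI[of _ 0]) auto
  then have "infdist h S \<in> closure (dist h ` S)"
    using closure_contains_Inf[of "dist h ` S"] \<open>S \<noteq> {}\<close> by (simp add: infdist_notempty)
  then obtain r where r: "\<And>n. r n \<in> dist h ` S" "r \<longlonglongrightarrow> infdist h S"
    unfolding closure_sequential by blast
  then have "\<forall>n. \<exists>y. y \<in> S \<and> r n = dist h y"
    by blast
  then obtain x where in_S: "\<And>n. x n \<in> S" and "\<And>n. dist h (x n) = r n"
    by metis
  then have minimizing: "(\<lambda>n. dist h (x n)) \<longlonglongrightarrow> infdist h S"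
    using r(2) by simp
  have "Cauchy x"
    using convex_minimizing_sequence_Cauchy[OF \<open>convex S\<close> in_S minimizing] .
  then obtain l where "l \<in> S" "x \<longlonglongrightarrow> l"
    using \<open>complete S\<close> in_S unfolding complete_def by blast
  then have "(\<lambda>n. dist h (x n)) \<longlonglongrightarrow> dist h l"
    by (intro tendsto_intros)
  then have "dist h l = infdist h S"
    using minimizing LIMSEQ_unique by blast
  then have "\<forall>y\<in>S. dist h l \<le> dist h y"
    using infdist_le[of _ S h] by simp
  with \<open>l \<in> S\<close> show thesis
    by (rule that)
qed

lemma orth_proj_closest:
  fixes V :: "'a::{real_inner, complete_space} set"
  assumes "convex V" "closed V" "V \<noteq> {}"
  shows orth_proj_in: "orth_proj V h \<in> V"
    and orth_proj_le: "\<forall>y\<in>V. dist h (orth_proj V h) \<le> dist h y"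
proof -
  obtain x where x: "x \<in> V" "\<forall>y\<in>V. dist h x \<le> dist h y"
    using complete_convex_closest_point_exists assms complete_eq_closed by metis
  have "orth_proj V h = x"
    unfolding orth_proj_def
    by (rule the_equality) (use x any_closest_point_unique[OF assms(1,2)] in blast)+
  then show "orth_proj V h \<in> V" "\<forall>y\<in>V. dist h (orth_proj V h) \<le> dist h y"
    using x by simp_all
qed

lemma infdist_eq_dist_orth_proj:
  fixes V :: "'a::{real_inner, complete_space} set"
  assumes "convex V" "closed V" "V \<noteq> {}"
  shows "infdist h V = dist h (orth_proj V h)"
proof (rule antisym)
  show "infdist h V \<le> dist h (orth_proj V h)"
    by (intro infdist_le orth_proj_in assms)
  show "dist h (orth_proj V h) \<le> infdist h V"
    unfolding infdist_notempty[OF \<open>V \<noteq> {}\<close>]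
    using orth_proj_le[OF assms] by (intro cINF_greatest \<open>V \<noteq> {}\<close>) blast
qed

text \<open>No hypothesis on \<open>W\<close> is needed: a closest point of \<open>V \<inter> W\<close> is at least as close as
  \<open>orth_proj V h \<in> V \<inter> W\<close>, hence a closest point of \<open>V\<close>, hence equal to it.\<close>

lemma orth_proj_Int_eq:
  fixes V :: "'a::{real_inner, complete_space} set"
  assumes "convex V" "closed V" "V \<noteq> {}" "orth_proj V h \<in> W"
  shows "orth_proj (V \<inter> W) h = orth_proj V h"
  unfolding orth_proj_def[of "V \<inter> W"]
proof (rule the_equality)
  let ?p = "orth_proj V h"
  show "?p \<in> V \<inter> W \<and> (\<forall>y\<in>V \<inter> W. dist h ?p \<le> dist h y)"
    using orth_proj_closest[OF assms(1-3)] assms(4) by blast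
  fix z
  assume z: "z \<in> V \<inter> W \<and> (\<forall>y\<in>V \<inter> W. dist h z \<le> dist h y)"
  then have "\<forall>y\<in>V. dist h z \<le> dist h y"
    using orth_proj_closest[OF assms(1-3)] assms(4) by (meson IntI order_trans)
  then show "z = ?p"
    using any_closest_point_unique[OF assms(1,2)] orth_proj_closest[OF assms(1-3)] z by blast
qed

lemma closed_subspace_Inter:
  assumes "\<forall>V\<in>S. closed_subspace V"
  shows "closed_subspace (\<Inter> S)"
  using assms unfolding closed_subspace_def by (simp add: subspace_Inter closed_Inter)

lemma closed_subspace_convex_closed_nonempty:
  assumes "closed_subspace V"
  shows "convex V" "closed V" "V \<noteq> {}"
  using assms subspace_imp_convex subspace_0 unfolding closed_subspace_def by auto

theorem lemma20:
  fixes L :: "'a::{real_inner, complete_space} set set"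
    and h :: 'a
    and A B :: "'a set set"
  assumes "\<forall>V\<in>L. closed_subspace V"
    and "L \<noteq> {}"
    and "A \<subseteq> L" and "B \<subseteq> L"
    and "B \<subseteq> closure_op L h A"
  shows "orth_proj (\<Inter> A) h = orth_proj (\<Inter> A \<inter> \<Inter> B) h
       \<and> infdist h (\<Inter> A) \<ge> infdist h (\<Inter> B)"
proof -
  have A: "convex (\<Inter> A)" "closed (\<Inter> A)" "\<Inter> A \<noteq> {}"
    using closed_subspace_convex_closed_nonempty closed_subspace_Inter assms(1,3) by blast+
  have "orth_proj (\<Inter> A) h \<in> \<Inter> B"
    using assms(5) unfolding closure_op_def by blast
  then have "orth_proj (\<Inter> A \<inter> \<Inter> B) h = orth_proj (\<Inter> A) h"
    by (rule orth_proj_Int_eq[OF A])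
  moreover have "infdist h (\<Inter> B) \<le> infdist h (\<Inter> A)"
    unfolding infdist_eq_dist_orth_proj[OF A]
    using \<open>orth_proj (\<Inter> A) h \<in> \<Inter> B\<close> by (rule infdist_le)
  ultimately show ?thesis
    by simp
qed

end
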